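(* Let $S,T$ be two symmetric scoring functions on $\mathcal{A}^*\times\mathcal{A}^*$. If $\max_{(x,y)\in\mathrm{SET}_{S,T}}x$ has a unique maximiser $(x_0,y_0)$, then $$\max_{\pi\in\nu^*_{n,S}}\frac{T_\pi(X_{[1,n]},Y_{[1,n]})}{n}\to y_0\quad\text{and}\quad\min_{\pi\in\nu^*_{n,S}}\frac{T_\pi(X_{[1,n]},Y_{[1,n]})}{n}\to y_0\quad\text{almost surely as }n\to\infty.$$
   Context: $\mathcal{A}$ finite alphabet, $\mathcal{A}^*=\mathcal{A}\cup\{G\}$ with gap symbol $G$. A symmetric scoring function is $R:\mathcal{A}^*\times\mathcal{A}^*\to\mathbb{R}$ with $R(a,b)=R(b,a)$, $R(G,G)=0$. An alignment of $x_{[1,n]},y_{[1,n]}$ is a pair of increasing sequences $1\le i_1<\dots<i_k\le n$, $1\le j_1<\dots<j_k\le n$; $\Lambda_n$ is the set of them; its score is $R_\nu(x_{[1,n]},y_{[1,n]})=\sum_{\ell}R(x_{i_\ell},y_{j_\ell})+\sum_{i\notin\{i_\ell\}}R(x_i,G)+\sum_{j\notin\{j_\ell\}}R(G,y_j)$. $X_1,X_2,\dots,Y_1,Y_2,\dots$ are i.i.d. random letters from a fixed distribution on $\mathcal{A}$; $L_{n,R}=\max_{\nu\in\Lambda_n}R_\nu(X_{[1,n]},Y_{[1,n]})$, and $\nu^*_{n,R}$ is the random set of $\nu\in\Lambda_n$ attaining this maximum; $\lambda_R$ is the a.s. limit of $L_{n,R}/n$. $\mathrm{SET}_{S,T}=\{(x,y):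 ax+by\le\lambda_{aS+bT}\ \forall(a,b)\in\mathbb{R}^2\}$, the a.s. Hausdorff limit of the closed convex hulls of $\{(S_\nu/n,T_\nu/n):\nu\in\Lambda_n\}$. *)

theory Defs
  imports "HOL-Probability.Probability"
begin

text \<open>Letters: a finite type 'a; the extended alphabet A* is 'a option, with None = gap G.\<close>

type_synonym 'a score = "'a option \<Rightarrow> 'a option \<Rightarrow> real"

definition symmetric_score :: "'a score \<Rightarrow> bool" where
  "symmetric_score R \<longleftrightarrow> (\<forall>a b. R a b = R b a) \<and> R None None = 0"

definition alignments :: "nat \<Rightarrow> (nat list \<times> nat list) set" where
  "alignments n = {(is, js). length is = length js \<and> sorted_wrt (<) is \<and> sorted_wrt (<) js
      \<and> set is \<subseteq> {1..n} \<and> set js \<subseteq> {1..n}}"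

definition align_score ::
  "'a score \<Rightarrow> nat \<Rightarrow> nat list \<times> nat list \<Rightarrow> (nat \<Rightarrow> 'a) \<Rightarrow> (nat \<Rightarrow> 'a) \<Rightarrow> real" where
  "align_score R n \<nu> x y =
     (\<Sum>l<length (fst \<nu>). R (Some (x (fst \<nu> ! l))) (Some (y (snd \<nu> ! l))))
     + (\<Sum>i\<in>{1..n} - set (fst \<nu>). R (Some (x i)) None)
     + (\<Sum>j\<in>{1..n} - set (snd \<nu>). R None (Some (y j)))"

definition opt_score :: "'a score \<Rightarrow> nat \<Rightarrow> (nat \<Rightarrow> 'a) \<Rightarrow> (nat \<Rightarrow> 'a) \<Rightarrow> real" where
  "opt_score R n x y = Max ((\<lambda>\<nu>. align_score R n \<nu> x y) ` alignments n)"

definition opt_alignments ::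
  "'a score \<Rightarrow> nat \<Rightarrow> (nat \<Rightarrow> 'a) \<Rightarrow> (nat \<Rightarrow> 'a) \<Rightarrow> (nat list \<times> nat list) set" where
  "opt_alignments R n x y = {\<nu> \<in> alignments n. align_score R n \<nu> x y = opt_score R n x y}"

definition lam :: "'w measure \<Rightarrow> (nat \<Rightarrow> 'w \<Rightarrow> 'a) \<Rightarrow> (nat \<Rightarrow> 'w \<Rightarrow> 'a) \<Rightarrow> 'a score \<Rightarrow> real" where
  "lam M X Y R = (THE c. AE \<omega> in M.
      (\<lambda>n. opt_score R n (\<lambda>i. X i \<omega>) (\<lambda>i. Y i \<omega>) / real n) \<longlonglongrightarrow> c)"

definition SET :: "'w measure \<Rightarrow> (nat \<Rightarrow> 'w \<Rightarrow> 'a) \<Rightarrow> (nat \<Rightarrow> 'w \<Rightarrow> 'a) \<Rightarrow> 'a score \<Rightarrow> 'a score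
    \<Rightarrow> (real \<times> real) set" where
  "SET M X Y S T = {(x, y). \<forall>a b. a * x + b * y \<le> lam M X Y (\<lambda>u v. a * S u v + b * T u v)}"

definition iid_letters :: "'w measure \<Rightarrow> 'a pmf \<Rightarrow> (nat \<Rightarrow> 'w \<Rightarrow> 'a) \<Rightarrow> (nat \<Rightarrow> 'w \<Rightarrow> 'a) \<Rightarrow> bool" where
  "iid_letters M p X Y \<longleftrightarrow>
     prob_space.indep_vars M (\<lambda>_. count_space UNIV) (\<lambda>k. case k of Inl i \<Rightarrow> X i | Inr j \<Rightarrow> Y j) UNIV
     \<and> (\<forall>i. distr M (count_space UNIV) (X i) = measure_pmf p)
     \<and> (\<forall>i. distr M (count_space UNIV) (Y i) = measure_pmf p)"

end

theory Submission
  imports Defs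
begin

text \<open>
  For every scoring function \<open>R\<close>, \<open>L(n, R) / n\<close> converges almost surely to \<open>lam R\<close>: the expected
  optimal score is superadditive, so Fekete's lemma applies to it, and changing one letter changes
  every alignment score by at most \<open>4 max \<bar>R\<bar>\<close>, so McDiarmid's inequality and Borel--Cantelli
  pull \<open>L(n, R)\<close> to its mean. Moreover \<open>lam R\<close> is Lipschitz in \<open>R\<close>.

  Fix an outcome for which the convergence holds for all rational combinations \<open>a S + b T\<close>. If the
  \<open>\<pi>\<^sub>n\<close> are \<open>S\<close>-optimal and \<open>T(\<pi>\<^sub>n) / n \<rightarrow> l\<close> along a subsequence, then passing to the limit in
  \<open>a L(n, S) + b T(\<pi>\<^sub>n) \<le> L(n, a S + b T)\<close>, first for rational and then by continuity for all
  \<open>(a, b)\<close>, shows \<open>(lam S, l) \<in> SET\<close>. As \<open>x0 \<le> lam S\<close>, uniqueness of the maximiser forces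
  \<open>l = y0\<close>; the sequence \<open>T(\<pi>\<^sub>n) / n\<close> is bounded, hence converges to \<open>y0\<close>, in particular for the
  \<open>S\<close>-optimal alignments maximising or minimising \<open>T\<close>.
\<close>

section \<open>Alignments and optimal scores\<close>

lemma alignmentsD:
  assumes "(ks, ls) \<in> alignments n"
  shows "length ks = length ls" "distinct ks" "distinct ls" "set ks \<subseteq> {1..n}" "set ls \<subseteq> {1..n}"
    "sorted_wrt (<) ks" "sorted_wrt (<) ls" "length ks \<le> n" "length ls \<le> n"
proof -
  show len: "length ks = length ls" and sorted: "sorted_wrt (<) ks" "sorted_wrt (<) ls"
    and sub: "set ks \<subseteq> {1..n}" "set ls \<subseteq> {1..n}"
    using assms by (auto simp: alignments_def)
  show dist: "distinct ks" "distinct ls" using sorted by (auto simp: strict_sorted_iff)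
  show "length ks \<le> n" "length ls \<le> n"
    using card_mono[OF _ sub(1)] card_mono[OF _ sub(2)] dist by (simp_all add: distinct_card[symmetric])
qed

lemma swap_image_alignments: "prod.swap ` alignments n = alignments n"
proof -
  have "prod.swap \<nu> \<in> alignments n" if "\<nu> \<in> alignments n" for \<nu>
    using that by (cases \<nu>) (simp add: alignments_def)
  then show ?thesis by (metis image_subsetI subset_antisym swap_swap image_eqI subsetI)
qed

lemma finite_alignments: "finite (alignments n)"
proof -
  let ?L = "{xs. set xs \<subseteq> {1..n} \<and> length xs \<le> n}"
  have "alignments n \<subseteq> ?L \<times> ?L" using alignmentsD by fastforce
  moreover have "finite (?L \<times> ?L)" by (intro finite_cartesian_product finite_lists_length_le) auto
  ultimately show ?thesis by (rule finite_subset)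
qed

lemma Nil_in_alignments: "([], []) \<in> alignments n"
  by (simp add: alignments_def)

lemma alignments_nonempty: "alignments n \<noteq> {}"
  using Nil_in_alignments by blast

lemma align_score_lincomb:
  "align_score (\<lambda>u v. a * S u v + b * T u v) n \<nu> x y = a * align_score S n \<nu> x y + b * align_score T n \<nu> x y"
  by (simp add: align_score_def sum.distrib sum_distrib_left algebra_simps)

lemma align_score_diff:
  "align_score (\<lambda>u v. S u v - T u v) n \<nu> x y = align_score S n \<nu> x y - align_score T n \<nu> x y"
  by (simp add: align_score_def sum_subtractf algebra_simps)

lemma align_score_swap:
  assumes "length ks = length ls"
  shows "align_score R n (ks, ls) x y = align_score (\<lambda>u v. R v u) n (ls, ks) y x"
  using assms by (simp add: align_score_def)

lemma align_score_cong:
  assumes "\<nu> \<in> alignments n" "\<And>i. i \<in> {1..n} \<Longrightarrow> x i = x' i" "\<And>i. i \<in> {1..n} \<Longrightarrow> y i = y' i"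
  shows "align_score R n \<nu> x y = align_score R n \<nu> x' y'"
proof -
  obtain ks ls where \<nu>: "\<nu> = (ks, ls)" by (cases \<nu>)
  note D = alignmentsD[OF assms(1)[unfolded \<nu>]]
  have "ks ! l \<in> {1..n}" "ls ! l \<in> {1..n}" if "l < length ks" for l
  proof -
    have "ks ! l \<in> set ks" "ls ! l \<in> set ls" using that D(1) by simp_all
    then show "ks ! l \<in> {1..n}" "ls ! l \<in> {1..n}" using D(4,5) by blast+
  qed
  then show ?thesis unfolding \<nu> align_score_def using assms(2,3)
    by (intro arg_cong2[where f="(+)"] sum.cong) auto
qed

definition score_norm :: "'a::finite score \<Rightarrow> real" where
  "score_norm R = Max (range (\<lambda>(u, v). \<bar>R u v\<bar>))"

lemma abs_score_le_score_norm: "\<bar>R u v\<bar> \<le> score_norm R"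
  unfolding score_norm_def by (rule Max_ge) (auto intro!: image_eqI[of _ _ "(u, v)"])

lemma score_norm_nonneg: "0 \<le> score_norm R"
  using abs_score_le_score_norm[of R None None] by linarith

lemma score_norm_le: "(\<And>u v. \<bar>R u v\<bar> \<le> B) \<Longrightarrow> score_norm R \<le> B"
  unfolding score_norm_def by (intro Max.boundedI) auto

lemma score_norm_swap: "score_norm (\<lambda>u v. R v u) = score_norm R"
proof (rule order_antisym)
  show "score_norm (\<lambda>u v. R v u) \<le> score_norm R"
    by (rule score_norm_le) (rule abs_score_le_score_norm)
  show "score_norm R \<le> score_norm (\<lambda>u v. R v u)"
    by (rule score_norm_le) (use abs_score_le_score_norm[of "\<lambda>u v. R v u"] in simp)
qed

lemma abs_sum_le_card_mult:
  fixes f :: "'b \<Rightarrow> real"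
  assumes "\<And>i. i \<in> A \<Longrightarrow> \<bar>f i\<bar> \<le> K"
  shows "\<bar>sum f A\<bar> \<le> real (card A) * K"
  by (rule order.trans[OF sum_abs sum_bounded_above]) (rule assms)

lemma abs_align_score_le:
  assumes "\<nu> \<in> alignments n"
  shows "\<bar>align_score R n \<nu> x y\<bar> \<le> 3 * real n * score_norm R"
proof -
  obtain ks ls where \<nu>: "\<nu> = (ks, ls)" by (cases \<nu>)
  note D = alignmentsD[OF assms[unfolded \<nu>]]
  let ?K = "score_norm R"
  have le_n: "real (card A) * ?K \<le> real n * ?K" if "card A \<le> n" for A :: "nat set"
    using that score_norm_nonneg by (intro mult_right_mono) auto
  have gaps: "card ({1..n} - A) \<le> n" for A :: "nat set"
    using card_mono[of "{1..n}" "{1..n} - A"] by auto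
  have "\<bar>\<Sum>l<length ks. R (Some (x (ks ! l))) (Some (y (ls ! l)))\<bar> \<le> real n * ?K"
    using le_n[of "{..<length ks}"] D(8) by (auto intro: order.trans[OF abs_sum_le_card_mult] abs_score_le_score_norm)
  moreover have "\<bar>\<Sum>i\<in>{1..n} - set ks. R (Some (x i)) None\<bar> \<le> real n * ?K"
    using le_n[OF gaps] by (auto intro: order.trans[OF abs_sum_le_card_mult] abs_score_le_score_norm)
  moreover have "\<bar>\<Sum>j\<in>{1..n} - set ls. R None (Some (y j))\<bar> \<le> real n * ?K"
    using le_n[OF gaps] by (auto intro: order.trans[OF abs_sum_le_card_mult] abs_score_le_score_norm)
  ultimately show ?thesis unfolding \<nu> align_score_def fst_conv snd_conv by linarith
qed

lemma abs_align_score_div_le: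
  assumes "\<nu> \<in> alignments n"
  shows "\<bar>align_score R n \<nu> x y / real n\<bar> \<le> 3 * score_norm R"
proof (cases "n = 0")
  case False
  then show ?thesis
    using abs_align_score_le[OF assms] by (simp add: abs_divide divide_le_eq mult_ac)
qed (simp add: score_norm_nonneg)

lemma abs_Max_image_diff_le:
  fixes f g :: "'b \<Rightarrow> real"
  assumes "finite A" "A \<noteq> {}" "\<And>a. a \<in> A \<Longrightarrow> \<bar>f a - g a\<bar> \<le> D"
  shows "\<bar>Max (f ` A) - Max (g ` A)\<bar> \<le> D"
proof -
  have "Max (f ` A) \<in> f ` A" "Max (g ` A) \<in> g ` A" using assms by (intro Max_in; auto)+
  then obtain a b where a: "a \<in> A" "f a = Max (f ` A)" and b: "b \<in> A" "g b = Max (g ` A)"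
    by (metis imageE)
  have "g a \<le> Max (g ` A)" "f b \<le> Max (f ` A)" using a b assms(1) by (auto intro: Max_ge)
  then show ?thesis using assms(3)[OF a(1)] assms(3)[OF b(1)] a b by linarith
qed

lemma align_score_le_opt_score:
  "\<nu> \<in> alignments n \<Longrightarrow> align_score R n \<nu> x y \<le> opt_score R n x y"
  unfolding opt_score_def by (rule Max_ge) (auto simp: finite_alignments)

lemma opt_score_attained:
  obtains \<nu> where "\<nu> \<in> alignments n" "align_score R n \<nu> x y = opt_score R n x y"
proof -
  have "opt_score R n x y \<in> (\<lambda>\<nu>. align_score R n \<nu> x y) ` alignments n"
    unfolding opt_score_def by (intro Max_in) (auto simp: finite_alignments alignments_nonempty)
  then show ?thesis using that by auto
qed

lemma opt_alignments_nonempty: "opt_alignments R n x y \<noteq> {}"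
  by (rule opt_score_attained) (auto simp: opt_alignments_def)

lemma finite_opt_alignments: "finite (opt_alignments R n x y)"
  by (rule finite_subset[OF _ finite_alignments[of n]]) (auto simp: opt_alignments_def)

lemma abs_opt_score_le: "\<bar>opt_score R n x y\<bar> \<le> 3 * real n * score_norm R"
  using abs_Max_image_diff_le[of "alignments n" "\<lambda>\<nu>. align_score R n \<nu> x y" "\<lambda>_. 0"]
  by (simp add: opt_score_def finite_alignments alignments_nonempty abs_align_score_le image_constant_conv)

lemma abs_opt_score_diff_le:
  "\<bar>opt_score R n x y - opt_score R' n x y\<bar> \<le> 3 * real n * score_norm (\<lambda>u v. R u v - R' u v)"
  unfolding opt_score_def
  by (rule abs_Max_image_diff_le)
     (auto simp: finite_alignments alignments_nonempty align_score_diff[symmetric] abs_align_score_le)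

lemma opt_score_swap: "opt_score R n x y = opt_score (\<lambda>u v. R v u) n y x"
proof -
  have "(\<lambda>\<nu>. align_score R n \<nu> x y) ` alignments n
      = (\<lambda>\<nu>. align_score (\<lambda>u v. R v u) n (prod.swap \<nu>) y x) ` alignments n"
  proof (intro image_cong refl)
    fix \<nu> assume \<nu>: "\<nu> \<in> alignments n"
    obtain ks ls where [simp]: "\<nu> = (ks, ls)" by (cases \<nu>)
    show "align_score R n \<nu> x y = align_score (\<lambda>u v. R v u) n (prod.swap \<nu>) y x"
      using align_score_swap[OF alignmentsD(1)] \<nu> by simp
  qed
  also have "\<dots> = (\<lambda>\<nu>. align_score (\<lambda>u v. R v u) n \<nu> y x) ` (prod.swap ` alignments n)"
    by (simp only: image_image)
  also note swap_image_alignments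
  finally show ?thesis by (simp add: opt_score_def)
qed

lemma opt_score_cong:
  assumes "\<And>i. i \<in> {1..n} \<Longrightarrow> x i = x' i" "\<And>i. i \<in> {1..n} \<Longrightarrow> y i = y' i"
  shows "opt_score R n x y = opt_score R n x' y'"
  unfolding opt_score_def using align_score_cong[OF _ assms]
  by (intro arg_cong[where f=Max] image_cong) auto

lemma abs_sum_diff_le_one_term:
  fixes f g :: "'b \<Rightarrow> real"
  assumes "finite A" "\<And>j. j \<in> A \<Longrightarrow> j \<noteq> k \<Longrightarrow> f j = g j" "\<bar>f k - g k\<bar> \<le> C" "0 \<le> C"
  shows "\<bar>sum f A - sum g A\<bar> \<le> C"
proof (cases "k \<in> A")
  case True
  have "sum f (A - {k}) = sum g (A - {k})" using assms(2) by (intro sum.cong) auto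
  then show ?thesis using True assms(1,3) by (simp add: sum.remove)
next
  case False
  then have "sum f A = sum g A" using assms(2) by (intro sum.cong) auto
  then show ?thesis using assms(4) by simp
qed

lemma distinct_nth_eq_unique:
  assumes "distinct xs"
  obtains l0 where "\<And>l. l < length xs \<Longrightarrow> l \<noteq> l0 \<Longrightarrow> xs ! l \<noteq> i"
proof (cases "i \<in> set xs")
  case True
  then obtain l0 where "l0 < length xs" "xs ! l0 = i" by (auto simp: in_set_conv_nth)
  then show ?thesis using assms that by (metis nth_eq_iff_index_eq)
qed (use that in \<open>metis nth_mem\<close>)

lemma align_score_fun_upd_fst:
  assumes "\<nu> \<in> alignments n"
  shows "\<bar>align_score R n \<nu> x y - align_score R n \<nu> (x(i := a)) y\<bar> \<le> 4 * score_norm R"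
proof -
  obtain ks ls where \<nu>: "\<nu> = (ks, ls)" by (cases \<nu>)
  note D = alignmentsD[OF assms[unfolded \<nu>]]
  obtain l0 where l0: "\<And>l. l < length ks \<Longrightarrow> l \<noteq> l0 \<Longrightarrow> ks ! l \<noteq> i"
    using distinct_nth_eq_unique[OF D(2)] by blast
  have osc: "\<bar>R u v - R u' v'\<bar> \<le> 2 * score_norm R" for u v u' v'
    using abs_score_le_score_norm[of R u v] abs_score_le_score_norm[of R u' v'] by linarith
  have "\<bar>(\<Sum>l<length ks. R (Some (x (ks ! l))) (Some (y (ls ! l))))
          - (\<Sum>l<length ks. R (Some ((x(i := a)) (ks ! l))) (Some (y (ls ! l))))\<bar> \<le> 2 * score_norm R"
    by (rule abs_sum_diff_le_one_term[where k = l0]) (use l0 osc score_norm_nonneg in auto)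
  moreover have "\<bar>(\<Sum>j\<in>{1..n} - set ks. R (Some (x j)) None)
          - (\<Sum>j\<in>{1..n} - set ks. R (Some ((x(i := a)) j)) None)\<bar> \<le> 2 * score_norm R"
    by (rule abs_sum_diff_le_one_term[where k = i]) (use osc score_norm_nonneg in auto)
  ultimately show ?thesis unfolding \<nu> align_score_def fst_conv snd_conv by linarith
qed

lemma opt_score_fun_upd_fst:
  "\<bar>opt_score R n x y - opt_score R n (x(i := a)) y\<bar> \<le> 4 * score_norm R"
  unfolding opt_score_def
  by (rule abs_Max_image_diff_le) (auto simp: finite_alignments alignments_nonempty align_score_fun_upd_fst)

lemma opt_score_fun_upd_snd:
  "\<bar>opt_score R n x y - opt_score R n x (y(i := a))\<bar> \<le> 4 * score_norm R"
  using opt_score_fun_upd_fst[of "\<lambda>u v. R v u" n y x i a]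
  by (simp only: opt_score_swap[of R n x] opt_score_swap[of R n x "y(i := a)"] score_norm_swap[of R])

lemma sum_lessThan_add:
  fixes f :: "nat \<Rightarrow> 'b::comm_monoid_add"
  shows "(\<Sum>l<m + n. f l) = (\<Sum>l<m. f l) + (\<Sum>l<n. f (m + l))"
  by (induction n) (simp_all add: add.assoc)

lemma gaps_shifted_append:
  fixes ks ks' :: "nat list"
  assumes "set ks \<subseteq> {1..m}" "set ks' \<subseteq> {1..n}"
  shows "{1..m + n} - set (ks @ map (\<lambda>i. i + m) ks') = ({1..m} - set ks) \<union> (\<lambda>i. i + m) ` ({1..n} - set ks')"
proof (intro equalityI subsetI)
  fix k assume k: "k \<in> {1..m + n} - set (ks @ map (\<lambda>i. i + m) ks')"
  show "k \<in> ({1..m} - set ks) \<union> (\<lambda>i. i + m) ` ({1..n} - set ks')"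
  proof (cases "k \<le> m")
    case False
    then have "k = (k - m) + m" "k - m \<in> {1..n} - set ks'" using k by force+
    then show ?thesis by blast
  qed (use k in auto)
qed (use assms in auto)

lemma shifted_append_in_alignments:
  assumes "(ks, ls) \<in> alignments m" "(ks', ls') \<in> alignments n"
  shows "(ks @ map (\<lambda>i. i + m) ks', ls @ map (\<lambda>j. j + m) ls') \<in> alignments (m + n)"
proof -
  note D = alignmentsD[OF assms(1)] and D' = alignmentsD[OF assms(2)]
  have "sorted_wrt (<) (ks @ map (\<lambda>i. i + m) ks')" "sorted_wrt (<) (ls @ map (\<lambda>i. i + m) ls')"
    unfolding sorted_wrt_append sorted_wrt_map using D D' by fastforce+
  then show ?thesis using D D' unfolding alignments_def by fastforce
qed

lemma align_score_shifted_append: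
  assumes "(ks, ls) \<in> alignments m" "(ks', ls') \<in> alignments n"
  shows "align_score R (m + n) (ks @ map (\<lambda>i. i + m) ks', ls @ map (\<lambda>j. j + m) ls') x y
       = align_score R m (ks, ls) x y + align_score R n (ks', ls') (\<lambda>i. x (i + m)) (\<lambda>i. y (i + m))"
proof -
  note D = alignmentsD[OF assms(1)] and D' = alignmentsD[OF assms(2)]
  have disj: "({1..m} - A) \<inter> (\<lambda>i. i + m) ` ({1..n} - B) = {}" for A B :: "nat set" by auto
  have "(\<Sum>l<length (ks @ map (\<lambda>i. i + m) ks').
            R (Some (x ((ks @ map (\<lambda>i. i + m) ks') ! l))) (Some (y ((ls @ map (\<lambda>j. j + m) ls') ! l))))
       = (\<Sum>l<length ks. R (Some (x (ks ! l))) (Some (y (ls ! l))))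
         + (\<Sum>l<length ks'. R (Some (x (ks' ! l + m))) (Some (y (ls' ! l + m))))"
    using D(1) D'(1) by (simp add: sum_lessThan_add nth_append)
  moreover have "(\<Sum>i\<in>{1..m + n} - set (ks @ map (\<lambda>i. i + m) ks'). R (Some (x i)) None)
      = (\<Sum>i\<in>{1..m} - set ks. R (Some (x i)) None) + (\<Sum>i\<in>{1..n} - set ks'. R (Some (x (i + m))) None)"
    unfolding gaps_shifted_append[OF D(4) D'(4)] by (subst sum.union_disjoint) (auto simp: disj sum.reindex)
  moreover have "(\<Sum>j\<in>{1..m + n} - set (ls @ map (\<lambda>j. j + m) ls'). R None (Some (y j)))
      = (\<Sum>j\<in>{1..m} - set ls. R None (Some (y j))) + (\<Sum>j\<in>{1..n} - set ls'. R None (Some (y (j + m))))"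
    unfolding gaps_shifted_append[OF D(5) D'(5)] by (subst sum.union_disjoint) (auto simp: disj sum.reindex)
  ultimately show ?thesis unfolding align_score_def fst_conv snd_conv by simp
qed

lemma opt_score_superadditive:
  "opt_score R m x y + opt_score R n (\<lambda>i. x (i + m)) (\<lambda>i. y (i + m)) \<le> opt_score R (m + n) x y"
proof -
  obtain ks ls where \<nu>: "(ks, ls) \<in> alignments m" "align_score R m (ks, ls) x y = opt_score R m x y"
    by (metis opt_score_attained surj_pair)
  obtain ks' ls' where \<nu>': "(ks', ls') \<in> alignments n"
      "align_score R n (ks', ls') (\<lambda>i. x (i + m)) (\<lambda>i. y (i + m)) = opt_score R n (\<lambda>i. x (i + m)) (\<lambda>i. y (i + m))"
    by (metis opt_score_attained surj_pair)
  show ?thesis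
    using align_score_le_opt_score[OF shifted_append_in_alignments[OF \<nu>(1) \<nu>'(1)], of R x y]
    unfolding align_score_shifted_append[OF \<nu>(1) \<nu>'(1)] \<nu>(2) \<nu>'(2) .
qed

section \<open>McDiarmid's inequality for product pmfs\<close>

lemma finite_set_Pi_pmf:
  fixes q :: "'a::finite pmf"
  assumes "finite A"
  shows "finite (set_pmf (Pi_pmf A d (\<lambda>_. q)))"
proof -
  have "set_pmf (Pi_pmf A d (\<lambda>_. q)) \<subseteq> PiE_dflt A d (\<lambda>_. UNIV)"
    using set_Pi_pmf_subset'[OF assms, of d "\<lambda>_. q"] by (auto simp: PiE_dflt_def)
  moreover have "finite (PiE_dflt A d (\<lambda>_. (UNIV :: 'a set)))" using assms by auto
  ultimately show ?thesis by (rule finite_subset)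
qed

lemma expectation_pair_pmf_finite:
  fixes f :: "'a \<times> 'b \<Rightarrow> real"
  assumes "finite (set_pmf A)" "finite (set_pmf B)"
  shows "measure_pmf.expectation (pair_pmf A B) f
       = measure_pmf.expectation B (\<lambda>b. measure_pmf.expectation A (\<lambda>a. f (a, b)))"
proof -
  have "measure_pmf.expectation (pair_pmf A B) f = (\<Sum>z\<in>set_pmf A \<times> set_pmf B. f z * pmf (pair_pmf A B) z)"
    using assms by (intro integral_measure_pmf_real) auto
  also have "\<dots> = (\<Sum>a\<in>set_pmf A. \<Sum>b\<in>set_pmf B. f (a,b) * (pmf A a * pmf B b))"
    unfolding sum.cartesian_product by (intro sum.cong) (auto simp: pmf_pair)
  also have "\<dots> = (\<Sum>b\<in>set_pmf B. \<Sum>a\<in>set_pmf A. f (a,b) * (pmf A a * pmf B b))"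
    by (rule sum.swap)
  also have "\<dots> = (\<Sum>b\<in>set_pmf B. (\<Sum>a\<in>set_pmf A. f (a,b) * pmf A a) * pmf B b)"
    by (simp add: sum_distrib_left sum_distrib_right mult_ac)
  also have "\<dots> = (\<Sum>b\<in>set_pmf B. measure_pmf.expectation A (\<lambda>a. f (a, b)) * pmf B b)"
    using assms by (intro sum.cong refl arg_cong2[where f="(*)"] integral_measure_pmf_real[symmetric]) auto
  also have "\<dots> = measure_pmf.expectation B (\<lambda>b. measure_pmf.expectation A (\<lambda>a. f (a, b)))"
    using assms by (intro integral_measure_pmf_real[symmetric]) auto
  finally show ?thesis .
qed

lemma abs_expectation_le_finite:
  fixes g :: "'a \<Rightarrow> real"
  assumes "finite (set_pmf q)" "\<And>y. \<bar>g y\<bar> \<le> c"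
  shows "\<bar>measure_pmf.expectation q g\<bar> \<le> c"
proof -
  have h: "g y \<le> c" "- c \<le> g y" for y using assms(2)[of y] by linarith+
  have "measure_pmf.expectation q g \<le> measure_pmf.expectation q (\<lambda>_. c)"
    using assms h by (intro integral_mono integrable_measure_pmf_finite) auto
  moreover have "measure_pmf.expectation q (\<lambda>_. - c) \<le> measure_pmf.expectation q g"
    using assms h by (intro integral_mono integrable_measure_pmf_finite) auto
  ultimately show ?thesis by simp
qed

lemma Hoeffdings_lemma_pmf:
  fixes q :: "'a::finite pmf" and g :: "'a \<Rightarrow> real"
  assumes "\<And>y y'. \<bar>g y - g y'\<bar> \<le> c" "l > 0"
  shows "measure_pmf.expectation q (\<lambda>y. exp (l * (g y - measure_pmf.expectation q g))) \<le> exp (l\<^sup>2 * c\<^sup>2 / 8)"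
proof -
  define m where "m = Min (range g)"
  have "m \<in> range g" unfolding m_def by (intro Min_in) auto
  then obtain y0 where y0: "g y0 = m" by auto
  have gi: "g y \<in> {m..m+c}" for y
  proof -
    have "m \<le> g y" unfolding m_def by (intro Min_le) auto
    moreover have "g y \<le> m + c" using assms(1)[of y y0] y0 by linarith
    ultimately show ?thesis by simp
  qed
  have ib: "interval_bounded_random_variable (measure_pmf q) g m (m + c)"
    by unfold_locales (use gi in auto)
  let ?e = "measure_pmf.expectation q"
  have "nn_integral (measure_pmf q) (\<lambda>y. exp (l * (g y - ?e g))) \<le> ennreal (exp (l\<^sup>2 * (m + c - m)\<^sup>2 / 8))"
    by (rule interval_bounded_random_variable.Hoeffdings_lemma_nn_integral[OF ib]) (use assms in auto)
  moreover have "nn_integral (measure_pmf q) (\<lambda>y. exp (l * (g y - ?e g)))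
       = ennreal (?e (\<lambda>y. exp (l * (g y - ?e g))))"
    by (intro nn_integral_eq_integral integrable_measure_pmf_finite) auto
  ultimately show ?thesis by simp
qed

lemma expectation_Pi_pmf_insert:
  fixes q :: "'a::finite pmf" and \<phi> :: "('k \<Rightarrow> 'a) \<Rightarrow> real"
  assumes "finite A" "x \<notin> A"
  shows "measure_pmf.expectation (Pi_pmf (insert x A) d (\<lambda>_. q)) \<phi>
       = measure_pmf.expectation (Pi_pmf A d (\<lambda>_. q)) (\<lambda>f. measure_pmf.expectation q (\<lambda>y. \<phi> (f(x := y))))"
  unfolding Pi_pmf_insert[OF assms] integral_map_pmf
  by (subst expectation_pair_pmf_finite) (simp_all add: finite_set_Pi_pmf assms(1))

lemma mgf_Pi_pmf_bounded_differences:
  fixes q :: "'a::finite pmf" and F :: "('k \<Rightarrow> 'a) \<Rightarrow> real"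
  assumes "finite A" "\<And>f k a. k \<in> A \<Longrightarrow> \<bar>F f - F (f(k := a))\<bar> \<le> c" "l > 0"
  shows "measure_pmf.expectation (Pi_pmf A d (\<lambda>_. q))
           (\<lambda>f. exp (l * (F f - measure_pmf.expectation (Pi_pmf A d (\<lambda>_. q)) F)))
         \<le> exp (l\<^sup>2 * real (card A) * c\<^sup>2 / 8)"
  using assms(1,2)
proof (induction A arbitrary: F rule: finite_induct)
  case (insert x A)
  let ?P = "Pi_pmf A d (\<lambda>_. q)" and ?E = "measure_pmf.expectation"
  note Fubini = expectation_Pi_pmf_insert[OF insert.hyps]
  define G where "G f = ?E q (\<lambda>y. F (f(x := y)))" for f
  define \<mu> where "\<mu> = ?E ?P G"
  have EF: "?E (Pi_pmf (insert x A) d (\<lambda>_. q)) F = \<mu>"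
    unfolding \<mu>_def G_def by (rule Fubini)
  have "\<bar>G f - G (f(k := a))\<bar> \<le> c" if "k \<in> A" for f k a
  proof -
    have "(f(k := a))(x := y) = (f(x := y))(k := a)" for y
      using that insert.hyps(2) by (auto simp: fun_eq_iff)
    then have "G f - G (f(k := a)) = ?E q (\<lambda>y. F (f(x := y)) - F ((f(x := y))(k := a)))"
      unfolding G_def by (subst Bochner_Integration.integral_diff) (auto intro!: integrable_measure_pmf_finite)
    also have "\<bar>\<dots>\<bar> \<le> c"
      using insert.prems that by (intro abs_expectation_le_finite) (simp_all del: fun_upd_apply)
    finally show ?thesis .
  qed
  then have IH: "?E ?P (\<lambda>f. exp (l * (G f - \<mu>))) \<le> exp (l\<^sup>2 * real (card A) * c\<^sup>2 / 8)"
    unfolding \<mu>_def by (rule insert.IH)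
  have inner: "?E q (\<lambda>y. exp (l * (F (f(x := y)) - G f))) \<le> exp (l\<^sup>2 * c\<^sup>2 / 8)" for f
  proof -
    have "\<bar>F (f(x := y)) - F (f(x := y'))\<bar> \<le> c" for y y'
      using insert.prems[of x "f(x := y)" y'] by (simp del: fun_upd_apply)
    then show ?thesis unfolding G_def by (intro Hoeffdings_lemma_pmf) (use assms(3) in auto)
  qed
  have split: "exp (l * (F (f(x := y)) - \<mu>)) = exp (l * (G f - \<mu>)) * exp (l * (F (f(x := y)) - G f))" for f y
    by (simp add: exp_add[symmetric] algebra_simps)
  have "?E (Pi_pmf (insert x A) d (\<lambda>_. q)) (\<lambda>f. exp (l * (F f - \<mu>)))
      = ?E ?P (\<lambda>f. exp (l * (G f - \<mu>)) * ?E q (\<lambda>y. exp (l * (F (f(x := y)) - G f))))"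
    unfolding Fubini split by simp
  also have "\<dots> \<le> ?E ?P (\<lambda>f. exp (l * (G f - \<mu>)) * exp (l\<^sup>2 * c\<^sup>2 / 8))"
    by (intro integral_mono integrable_measure_pmf_finite finite_set_Pi_pmf insert.hyps mult_left_mono inner)
       auto
  also have "\<dots> \<le> exp (l\<^sup>2 * real (card A) * c\<^sup>2 / 8) * exp (l\<^sup>2 * c\<^sup>2 / 8)"
    using IH by simp
  also have "\<dots> = exp (l\<^sup>2 * real (card (insert x A)) * c\<^sup>2 / 8)"
    using insert.hyps by (simp add: exp_add[symmetric] algebra_simps add_divide_distrib)
  finally show ?case unfolding EF .
qed simp

lemma mcdiarmid_upper_Pi_pmf:
  fixes q :: "'a::finite pmf" and F :: "('k \<Rightarrow> 'a) \<Rightarrow> real"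
  assumes "finite A" "\<And>f k a. k \<in> A \<Longrightarrow> \<bar>F f - F (f(k:=a))\<bar> \<le> c" "t > 0" "c > 0" "A \<noteq> {}"
  shows "measure_pmf.prob (Pi_pmf A d (\<lambda>_. q)) {f. F f - measure_pmf.expectation (Pi_pmf A d (\<lambda>_. q)) F \<ge> t}
         \<le> exp (- 2 * t\<^sup>2 / (real (card A) * c\<^sup>2))"
proof -
  let ?P = "Pi_pmf A d (\<lambda>_. q)"
  let ?E = "measure_pmf.expectation"
  define N where "N = real (card A)"
  have N: "N > 0" using assms by (simp add: N_def card_gt_0_iff)
  define l where "l = 4 * t / (N * c\<^sup>2)"
  have l: "l > 0" using N assms by (simp add: l_def)
  have fin: "finite (set_pmf ?P)" by (rule finite_set_Pi_pmf) fact
  have "measure_pmf.prob ?P {f. F f - ?E ?P F \<ge> t} = ?E ?P (indicator {f. F f - ?E ?P F \<ge> t})"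
    by simp
  also have "\<dots> \<le> ?E ?P (\<lambda>f. exp (l * (F f - ?E ?P F)) * exp (- l * t))"
  proof (intro integral_mono integrable_measure_pmf_finite fin)
    fix f
    show "indicator {f. F f - ?E ?P F \<ge> t} f \<le> exp (l * (F f - ?E ?P F)) * exp (- l * t)"
    proof (cases "F f - ?E ?P F \<ge> t")
      case True
      then have "l * t \<le> l * (F f - ?E ?P F)" using l by (intro mult_left_mono) auto
      then have "1 \<le> exp (l * (F f - ?E ?P F) + - l * t)" by simp
      then show ?thesis using True by (simp add: mult_exp_exp)
    qed simp
  qed
  also have "\<dots> = ?E ?P (\<lambda>f. exp (l * (F f - ?E ?P F))) * exp (- l * t)" by simp
  also have "\<dots> \<le> exp (l\<^sup>2 * N * c\<^sup>2 / 8) * exp (- l * t)"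
    unfolding N_def by (intro mult_right_mono mgf_Pi_pmf_bounded_differences assms l) auto
  also have "\<dots> = exp (- 2 * t\<^sup>2 / (N * c\<^sup>2))"
    using N assms unfolding exp_add[symmetric] l_def by (simp add: field_simps power2_eq_square)
  finally show ?thesis unfolding N_def .
qed

lemma mcdiarmid_Pi_pmf:
  fixes q :: "'a::finite pmf" and F :: "('k \<Rightarrow> 'a) \<Rightarrow> real"
  assumes "finite A" "\<And>f k a. k \<in> A \<Longrightarrow> \<bar>F f - F (f(k:=a))\<bar> \<le> c" "t > 0" "c > 0" "A \<noteq> {}"
  shows "measure_pmf.prob (Pi_pmf A d (\<lambda>_. q)) {f. \<bar>F f - measure_pmf.expectation (Pi_pmf A d (\<lambda>_. q)) F\<bar> \<ge> t}
         \<le> 2 * exp (- 2 * t\<^sup>2 / (real (card A) * c\<^sup>2))"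
proof -
  let ?P = "Pi_pmf A d (\<lambda>_. q)"
  let ?E = "measure_pmf.expectation"
  have fin: "finite (set_pmf ?P)" by (rule finite_set_Pi_pmf) fact
  have negE: "?E ?P (\<lambda>f. - F f) = - ?E ?P F" by simp
  have "{f. \<bar>F f - ?E ?P F\<bar> \<ge> t} = {f. F f - ?E ?P F \<ge> t} \<union> {f. - F f - ?E ?P (\<lambda>f. - F f) \<ge> t}"
    unfolding negE by auto
  then have "measure_pmf.prob ?P {f. \<bar>F f - ?E ?P F\<bar> \<ge> t}
     \<le> measure_pmf.prob ?P {f. F f - ?E ?P F \<ge> t} + measure_pmf.prob ?P {f. - F f - ?E ?P (\<lambda>f. - F f) \<ge> t}"
    by (simp add: measure_Un_le)
  also have "\<dots> \<le> exp (- 2 * t\<^sup>2 / (real (card A) * c\<^sup>2)) + exp (- 2 * t\<^sup>2 / (real (card A) * c\<^sup>2))"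
    by (intro add_mono mcdiarmid_upper_Pi_pmf assms) (use assms(2) in \<open>auto simp: abs_minus_commute\<close>)
  finally show ?thesis by simp
qed

section \<open>The letters as a product pmf\<close>

definition letters :: "(nat \<Rightarrow> 'w \<Rightarrow> 'a) \<Rightarrow> (nat \<Rightarrow> 'w \<Rightarrow> 'a) \<Rightarrow> 'w \<Rightarrow> nat + nat \<Rightarrow> 'a" where
  "letters X Y \<omega> = (\<lambda>k. case k of Inl i \<Rightarrow> X i \<omega> | Inr j \<Rightarrow> Y j \<omega>)"

lemma distr_restrict_Pi_pmf:
  fixes p :: "'a pmf"
  assumes "finite J" "J \<noteq> {}"
  shows "distr (Pi_pmf J d (\<lambda>_. p)) (PiM J (\<lambda>_. count_space UNIV)) (\<lambda>f. restrict f J)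
       = PiM J (\<lambda>_. measure_pmf p)"
proof -
  let ?W = "Pi_pmf J d (\<lambda>_. p)"
  have rv: "measure_pmf.random_variable ?W (count_space UNIV) (\<lambda>f. f k)" for k
    by (simp add: measurable_pmf_measure1)
  have "prob_space.indep_vars (measure_pmf ?W) (\<lambda>_. count_space UNIV) (\<lambda>k f. f k) J"
    by (rule indep_vars_Pi_pmf[OF assms(1)])
  then have "distr ?W (PiM J (\<lambda>_. count_space UNIV)) (\<lambda>f. \<lambda>k\<in>J. f k)
      = PiM J (\<lambda>k. distr ?W (count_space UNIV) (\<lambda>f. f k))"
    by (subst (asm) prob_space.indep_vars_iff_distr_eq_PiM'[OF measure_pmf.prob_space_axioms assms(2) rv])
  also have "\<dots> = PiM J (\<lambda>_. measure_pmf p)"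
  proof (intro PiM_cong refl)
    fix k assume "k \<in> J"
    then show "distr ?W (count_space UNIV) (\<lambda>f. f k) = measure_pmf p"
      using Pi_pmf_component[OF assms(1), of k d "\<lambda>_. p"] map_pmf_rep_eq[of "\<lambda>f. f k" ?W] by simp
  qed
  finally show ?thesis .
qed

lemma indep_vars_letters:
  assumes "iid_letters M p X Y"
  shows "prob_space.indep_vars M (\<lambda>_. count_space UNIV) (\<lambda>k \<omega>. letters X Y \<omega> k) UNIV"
proof -
  have "(\<lambda>k \<omega>. letters X Y \<omega> k) = (\<lambda>k. case k of Inl i \<Rightarrow> X i | Inr j \<Rightarrow> Y j)"
    by (auto simp: letters_def fun_eq_iff split: sum.splits)
  then show ?thesis using assms by (simp add: iid_letters_def)
qed

lemma measurable_letters: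
  assumes "prob_space M" "iid_letters M p X Y"
  shows "(\<lambda>\<omega>. letters X Y \<omega> k) \<in> measurable M (count_space UNIV)"
  using indep_vars_letters[OF assms(2)] by (auto simp: prob_space.indep_vars_def[OF assms(1)])

lemma distr_restrict_letters:
  fixes p :: "'a pmf"
  assumes "prob_space M" "iid_letters M p X Y" "finite J" "J \<noteq> {}"
  shows "distr M (PiM J (\<lambda>_. count_space UNIV)) (\<lambda>\<omega>. restrict (letters X Y \<omega>) J)
       = PiM J (\<lambda>_. measure_pmf p)"
proof -
  interpret prob_space M by fact
  have "indep_vars (\<lambda>_. count_space UNIV) (\<lambda>k \<omega>. letters X Y \<omega> k) J"
    by (rule indep_vars_subset[OF indep_vars_letters[OF assms(2)]]) simp
  then have "distr M (PiM J (\<lambda>_. count_space UNIV)) (\<lambda>\<omega>. \<lambda>k\<in>J. letters X Y \<omega> k)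
      = PiM J (\<lambda>k. distr M (count_space UNIV) (\<lambda>\<omega>. letters X Y \<omega> k))"
    by (subst (asm) indep_vars_iff_distr_eq_PiM'[OF assms(4) measurable_letters[OF assms(1,2)]])
  also have "\<dots> = PiM J (\<lambda>_. measure_pmf p)"
  proof (intro PiM_cong refl)
    fix k :: "nat + nat"
    show "distr M (count_space UNIV) (\<lambda>\<omega>. letters X Y \<omega> k) = measure_pmf p"
      using assms(2) by (cases k) (simp_all add: iid_letters_def letters_def)
  qed
  finally show ?thesis by (simp add: restrict_def)
qed

lemma measure_letters_eq_Pi_pmf:
  fixes p :: "'a::finite pmf" and P :: "(nat + nat \<Rightarrow> 'a) \<Rightarrow> bool"
  assumes "prob_space M" "iid_letters M p X Y" "finite J" "J \<noteq> {}"
    and local: "\<And>\<zeta> \<zeta>'. (\<And>k. k \<in> J \<Longrightarrow> \<zeta> k = \<zeta>' k) \<Longrightarrow> P \<zeta> = P \<zeta>'"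
  shows "{\<omega> \<in> space M. P (letters X Y \<omega>)} \<in> sets M"
    "measure M {\<omega> \<in> space M. P (letters X Y \<omega>)} = measure_pmf.prob (Pi_pmf J d (\<lambda>_. p)) {\<zeta>. P \<zeta>}"
proof -
  let ?PM = "PiM J (\<lambda>_. count_space (UNIV :: 'a set))"
  define S where "S = {\<zeta> \<in> space ?PM. P \<zeta>}"
  have S: "S \<in> sets ?PM"
    using count_space_PiM_finite[OF assms(3), of "\<lambda>_. UNIV :: 'a set"] by (simp add: S_def)
  have P_restrict: "P (restrict \<zeta> J) = P \<zeta>" for \<zeta> by (rule local) simp
  have meas: "(\<lambda>\<omega>. restrict (letters X Y \<omega>) J) \<in> measurable M ?PM"
    by (intro measurable_restrict measurable_letters[OF assms(1,2)])
  have event: "{\<omega> \<in> space M. P (letters X Y \<omega>)} = (\<lambda>\<omega>. restrict (letters X Y \<omega>) J) -` S \<inter> space M"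
    using P_restrict by (auto simp: S_def space_PiM)
  show "{\<omega> \<in> space M. P (letters X Y \<omega>)} \<in> sets M"
    unfolding event using meas S by (rule measurable_sets)
  have "measure M {\<omega> \<in> space M. P (letters X Y \<omega>)}
      = measure (distr M ?PM (\<lambda>\<omega>. restrict (letters X Y \<omega>) J)) S"
    unfolding event by (rule measure_distr[symmetric, OF meas S])
  also have "\<dots> = measure (distr (Pi_pmf J d (\<lambda>_. p)) ?PM (\<lambda>f. restrict f J)) S"
    unfolding distr_restrict_letters[OF assms(1-4)] distr_restrict_Pi_pmf[OF assms(3,4)] ..
  also have "\<dots> = measure_pmf.prob (Pi_pmf J d (\<lambda>_. p)) {\<zeta>. P \<zeta>}"
    using P_restrict S by (subst measure_distr) (auto simp: S_def space_PiM measurable_pmf_measure1)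
  finally show "measure M {\<omega> \<in> space M. P (letters X Y \<omega>)} = measure_pmf.prob (Pi_pmf J d (\<lambda>_. p)) {\<zeta>. P \<zeta>}" .
qed

section \<open>Fekete's lemma\<close>

lemma superadditive_mult_add:
  fixes a :: "nat \<Rightarrow> real"
  assumes "\<And>m n. a m + a n \<le> a (m + n)"
  shows "real q * a k + a r \<le> a (q * k + r)"
proof (induction q)
  case (Suc q)
  have "real (Suc q) * a k + a r = a k + (real q * a k + a r)" by (simp add: algebra_simps)
  also have "\<dots> \<le> a k + a (q * k + r)" using Suc by simp
  also have "\<dots> \<le> a (Suc q * k + r)" using assms[of k "q * k + r"] by (simp add: add.assoc)
  finally show ?case .
qed simp

lemma superadditive_quotient_ge:
  fixes a :: "nat \<Rightarrow> real"
  assumes sa: "\<And>m n. a m + a n \<le> a (m + n)" and bd: "\<And>n. \<bar>a n\<bar> \<le> C * real n"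
    and "k \<ge> 1" "n \<ge> 1"
  shows "a k / real k - 2 * C * real k / real n \<le> a n / real n"
proof -
  define q r where "q = n div k" and "r = n mod k"
  have n: "n = q * k + r" and "r < k" using \<open>k \<ge> 1\<close> by (simp_all add: q_def r_def)
  have "C \<ge> 0" using bd[of 1] by simp
  have "- (C * real k) \<le> a r"
    using bd[of r] mult_left_mono[of "real r" "real k" C] \<open>r < k\<close> \<open>C \<ge> 0\<close> by linarith
  moreover have "real r * (a k / real k) \<le> C * real k"
  proof -
    have "a k / real k \<le> C" using bd[of k] \<open>k \<ge> 1\<close> by (simp add: divide_le_eq abs_le_iff)
    then have "real r * (a k / real k) \<le> real r * C" by (intro mult_left_mono) auto
    also have "\<dots> \<le> real k * C" using \<open>r < k\<close> \<open>C \<ge> 0\<close> by (intro mult_right_mono) auto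
    finally show ?thesis by (simp add: mult.commute)
  qed
  moreover have "real q * a k = real n * (a k / real k) - real r * (a k / real k)"
    using \<open>k \<ge> 1\<close> n by (simp add: field_simps)
  ultimately have "real n * (a k / real k) - 2 * C * real k \<le> a n"
    using superadditive_mult_add[OF sa, of q k r, folded n] by linarith
  then have "(real n * (a k / real k) - 2 * C * real k) / real n \<le> a n / real n"
    by (rule divide_right_mono) simp
  then show ?thesis using \<open>n \<ge> 1\<close> by (simp add: diff_divide_distrib)
qed

lemma fekete:
  fixes a :: "nat \<Rightarrow> real"
  assumes sa: "\<And>m n. a m + a n \<le> a (m + n)" and bd: "\<And>n. \<bar>a n\<bar> \<le> C * real n"
  shows "convergent (\<lambda>n. a n / real n)"
proof -
  define s where "s = (SUP n\<in>{1..}. a n / real n)"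
  have bdd: "bdd_above ((\<lambda>n. a n / real n) ` {1..})"
    using bd by (intro bdd_aboveI[of _ C]) (auto simp: divide_le_eq abs_le_iff)
  have "(\<lambda>n. a n / real n) \<longlonglongrightarrow> s"
  proof (rule LIMSEQ_I)
    fix e :: real assume "e > 0"
    then have "s - e / 2 < s" by simp
    then obtain k where k: "k \<ge> 1" "s - e / 2 < a k / real k"
      unfolding s_def using bdd by (subst (asm) less_cSUP_iff) auto
    obtain N :: nat where N: "N > 4 * C * real k / e" using reals_Archimedean2 by blast
    have "norm (a n / real n - s) < e" if "n \<ge> max N 1" for n
    proof -
      have "n \<ge> 1" "real n \<ge> real N" using that by auto
      have "4 * C * real k < e * real N" using N \<open>e > 0\<close> by (simp add: field_simps)
      also have "\<dots> \<le> e * real n" using \<open>real n \<ge> real N\<close> \<open>e > 0\<close> by simp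
      finally have "2 * C * real k / real n < e / 2" using \<open>n \<ge> 1\<close> by (simp add: field_simps)
      moreover have "a n / real n \<le> s"
        unfolding s_def using bdd \<open>n \<ge> 1\<close> by (intro cSUP_upper) auto
      ultimately show ?thesis
        using superadditive_quotient_ge[OF sa bd k(1) \<open>n \<ge> 1\<close>] k(2) by simp
    qed
    then show "\<exists>N. \<forall>n\<ge>N. norm (a n / real n - s) < e" by blast
  qed
  then show ?thesis by (rule convergentI)
qed

section \<open>Almost sure convergence of the optimal score\<close>

definition letter_positions :: "nat \<Rightarrow> (nat + nat) set" where
  "letter_positions n = Inl ` {1..n} \<union> Inr ` {1..n}"

definition opt_score_letters :: "'a score \<Rightarrow> nat \<Rightarrow> (nat + nat \<Rightarrow> 'a) \<Rightarrow> real" where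
  "opt_score_letters R n \<zeta> = opt_score R n (\<lambda>i. \<zeta> (Inl i)) (\<lambda>i. \<zeta> (Inr i))"

definition letters_pmf :: "'a pmf \<Rightarrow> nat \<Rightarrow> (nat + nat \<Rightarrow> 'a) pmf" where
  "letters_pmf p n = Pi_pmf (letter_positions n) undefined (\<lambda>_. p)"

definition expected_opt_score :: "'a score \<Rightarrow> 'a pmf \<Rightarrow> nat \<Rightarrow> real" where
  "expected_opt_score R p n = measure_pmf.expectation (letters_pmf p n) (opt_score_letters R n)"

lemma finite_letter_positions: "finite (letter_positions n)"
  by (simp add: letter_positions_def)

lemma card_letter_positions: "card (letter_positions n) = 2 * n"
  unfolding letter_positions_def by (subst card_Un_disjoint) (auto simp: card_image)

lemma letter_positions_nonempty: "n \<ge> 1 \<Longrightarrow> letter_positions n \<noteq> {}"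
  by (auto simp: letter_positions_def)

lemma opt_score_letters_letters:
  "opt_score_letters R n (letters X Y \<omega>) = opt_score R n (\<lambda>i. X i \<omega>) (\<lambda>i. Y i \<omega>)"
  by (simp add: opt_score_letters_def letters_def)

lemma opt_score_letters_cong:
  assumes "\<And>k. k \<in> letter_positions n \<Longrightarrow> \<zeta> k = \<zeta>' k"
  shows "opt_score_letters R n \<zeta> = opt_score_letters R n \<zeta>'"
  unfolding opt_score_letters_def by (rule opt_score_cong) (use assms in \<open>auto simp: letter_positions_def\<close>)

lemma opt_score_letters_fun_upd:
  "\<bar>opt_score_letters R n \<zeta> - opt_score_letters R n (\<zeta>(k := a))\<bar> \<le> 4 * score_norm R"
proof (cases k)
  case (Inl i)
  have "(\<lambda>j. (\<zeta>(k := a)) (Inl j)) = (\<lambda>j. \<zeta> (Inl j))(i := a)" "(\<lambda>j. (\<zeta>(k := a)) (Inr j)) = (\<lambda>j. \<zeta> (Inr j))"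
    using Inl by (auto simp: fun_eq_iff)
  then show ?thesis unfolding opt_score_letters_def by (simp only: opt_score_fun_upd_fst)
next
  case (Inr i)
  have "(\<lambda>j. (\<zeta>(k := a)) (Inr j)) = (\<lambda>j. \<zeta> (Inr j))(i := a)" "(\<lambda>j. (\<zeta>(k := a)) (Inl j)) = (\<lambda>j. \<zeta> (Inl j))"
    using Inr by (auto simp: fun_eq_iff)
  then show ?thesis unfolding opt_score_letters_def by (simp only: opt_score_fun_upd_snd)
qed

lemma finite_set_letters_pmf: "finite (set_pmf (letters_pmf (p :: 'a::finite pmf) n))"
  unfolding letters_pmf_def by (rule finite_set_Pi_pmf) (rule finite_letter_positions)

lemma abs_expected_opt_score_le: "\<bar>expected_opt_score R p n\<bar> \<le> 3 * score_norm R * real n"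
  unfolding expected_opt_score_def using abs_opt_score_le
  by (intro abs_expectation_le_finite finite_set_letters_pmf) (auto simp: opt_score_letters_def mult_ac)

text \<open>Under \<open>letters_pmf p (m + n)\<close> the first \<open>m\<close> letters of each word and the next \<open>n\<close> ones
  (positions shifted by \<open>m\<close>) are distributed as \<open>letters_pmf p m\<close> and \<open>letters_pmf p n\<close>, so
  superadditivity of the expectation follows from the pointwise one.\<close>

lemma expected_opt_score_superadditive:
  fixes p :: "'a::finite pmf"
  shows "expected_opt_score R p m + expected_opt_score R p n \<le> expected_opt_score R p (m + n)"
proof -
  let ?E = "measure_pmf.expectation" and ?d = "undefined :: 'a"
  let ?W = "letters_pmf p (m + n)" and ?sh = "map_sum (\<lambda>i. i + m) (\<lambda>i. i + m)"
  have fin: "finite (set_pmf ?W)" by (rule finite_set_letters_pmf)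
  have first: "expected_opt_score R p m = ?E ?W (opt_score_letters R m)"
  proof -
    have "letter_positions m \<subseteq> letter_positions (m + n)" by (auto simp: letter_positions_def)
    then have "letters_pmf p m = map_pmf (\<lambda>f x. if x \<in> letter_positions m then f x else ?d) ?W"
      unfolding letters_pmf_def by (rule Pi_pmf_subset[OF finite_letter_positions])
    then show ?thesis unfolding expected_opt_score_def
      by (simp, intro Bochner_Integration.integral_cong refl opt_score_letters_cong) auto
  qed
  define J where "J = ?sh ` letter_positions n"
  have "inj ?sh"
  proof (rule injI)
    fix x y assume "?sh x = ?sh y" then show "x = y" by (cases x; cases y) auto
  qed
  have second: "expected_opt_score R p n = ?E ?W (\<lambda>f. opt_score_letters R n (f \<circ> ?sh))"
  proof -
    have "letters_pmf p n = map_pmf (\<lambda>g. g \<circ> ?sh) (Pi_pmf J ?d (\<lambda>_. p))"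
      unfolding letters_pmf_def J_def
      using \<open>inj ?sh\<close> by (intro Pi_pmf_bij_betw[OF finite_letter_positions])
        (auto simp: bij_betw_def inj_image_mem_iff intro: inj_on_subset)
    also have "J \<subseteq> letter_positions (m + n)" by (auto simp: J_def letter_positions_def)
    then have "Pi_pmf J ?d (\<lambda>_. p) = map_pmf (\<lambda>f x. if x \<in> J then f x else ?d) ?W"
      unfolding letters_pmf_def by (rule Pi_pmf_subset[OF finite_letter_positions])
    finally show ?thesis unfolding expected_opt_score_def
      by (simp add: pmf.map_comp o_def, intro Bochner_Integration.integral_cong refl opt_score_letters_cong)
         (simp add: J_def)
  qed
  have "opt_score_letters R m f + opt_score_letters R n (f \<circ> ?sh) \<le> opt_score_letters R (m + n) f" for f
    using opt_score_superadditive[of R m "\<lambda>i. f (Inl i)" "\<lambda>i. f (Inr i)" n]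
    by (simp add: opt_score_letters_def o_def)
  then have "?E ?W (\<lambda>f. opt_score_letters R m f + opt_score_letters R n (f \<circ> ?sh))
      \<le> expected_opt_score R p (m + n)"
    unfolding expected_opt_score_def by (intro integral_mono integrable_measure_pmf_finite fin)
  then show ?thesis
    unfolding first second by (subst (asm) Bochner_Integration.integral_add) (auto intro: integrable_measure_pmf_finite fin)
qed

lemma prob_opt_score_deviation_le:
  fixes p :: "'a::finite pmf" and R :: "'a score"
  assumes "prob_space M" "iid_letters M p X Y" "\<delta> > 0" "n \<ge> 1"
  defines "E \<equiv> {\<omega> \<in> space M. \<delta> * real n \<le> \<bar>opt_score_letters R n (letters X Y \<omega>) - expected_opt_score R p n\<bar>}"
  shows "E \<in> sets M" "measure M E \<le> 2 * exp (- (\<delta> / (4 * score_norm R + 1))\<^sup>2) ^ n"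
proof -
  define c where "c = 4 * score_norm R + 1"
  have "c > 0" using score_norm_nonneg[of R] by (simp add: c_def)
  let ?P = "\<lambda>\<zeta>. \<delta> * real n \<le> \<bar>opt_score_letters R n \<zeta> - expected_opt_score R p n\<bar>"
  have local: "?P \<zeta> = ?P \<zeta>'" if "\<And>k. k \<in> letter_positions n \<Longrightarrow> \<zeta> k = \<zeta>' k" for \<zeta> \<zeta>'
    using opt_score_letters_cong[OF that] by simp
  note transfer = measure_letters_eq_Pi_pmf[where P = ?P, OF assms(1,2)
      finite_letter_positions letter_positions_nonempty[OF assms(4)] local]
  have E: "E = {\<omega> \<in> space M. ?P (letters X Y \<omega>)}" by (simp add: E_def)
  show "E \<in> sets M" unfolding E by (rule transfer(1))
  have "measure M E = measure_pmf.prob (letters_pmf p n) {\<zeta>. ?P \<zeta>}"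
    unfolding E letters_pmf_def by (rule transfer(2))
  also have "\<dots> \<le> 2 * exp (- 2 * (\<delta> * real n)\<^sup>2 / (real (card (letter_positions n)) * c\<^sup>2))"
    unfolding expected_opt_score_def letters_pmf_def
  proof (rule mcdiarmid_Pi_pmf[OF finite_letter_positions])
    show "\<bar>opt_score_letters R n f - opt_score_letters R n (f(k := a))\<bar> \<le> c" for f k a
      using opt_score_letters_fun_upd[of R n f k a] by (simp add: c_def)
  qed (use assms(3,4) \<open>c > 0\<close> letter_positions_nonempty in auto)
  also have "- 2 * (\<delta> * real n)\<^sup>2 / (real (card (letter_positions n)) * c\<^sup>2) = real n * (- (\<delta> / c)\<^sup>2)"
    using assms(4) \<open>c > 0\<close> by (simp add: card_letter_positions power2_eq_square power_divide)
  finally show "measure M E \<le> 2 * exp (- (\<delta> / (4 * score_norm R + 1))\<^sup>2) ^ n"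
    by (simp only: exp_of_nat_mult c_def)
qed

lemma AE_eventually_opt_score_near_expectation:
  fixes p :: "'a::finite pmf"
  assumes "prob_space M" "iid_letters M p X Y" "\<delta> > 0"
  shows "AE \<omega> in M. eventually (\<lambda>n. \<bar>opt_score_letters R n (letters X Y \<omega>) - expected_opt_score R p n\<bar> < \<delta> * real n)
      sequentially"
proof -
  interpret prob_space M by fact
  define E where "E n = (if n = 0 then {} else {\<omega> \<in> space M.
      \<delta> * real n \<le> \<bar>opt_score_letters R n (letters X Y \<omega>) - expected_opt_score R p n\<bar>})" for n
  define r where "r = exp (- (\<delta> / (4 * score_norm R + 1))\<^sup>2)"
  have "0 < \<delta> / (4 * score_norm R + 1)"
    using assms(3) score_norm_nonneg[of R] by simp
  then have "norm r < 1" unfolding r_def by (simp del: divide_eq_0_iff)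
  have sets: "E n \<in> sets M" for n
    using prob_opt_score_deviation_le(1)[OF assms, of n R] by (cases "n = 0") (simp_all add: E_def)
  have "norm (measure M (E n)) \<le> 2 * r ^ n" for n
    using prob_opt_score_deviation_le(2)[OF assms, of n R] unfolding r_def[symmetric]
    by (cases "n = 0") (simp_all add: E_def)
  then have "summable (\<lambda>n. measure M (E n))"
    using \<open>norm r < 1\<close> by (intro summable_comparison_test[OF _ summable_mult[OF summable_geometric]]) auto
  then have "AE \<omega> in M. eventually (\<lambda>n. \<omega> \<in> space M - E n) sequentially"
    using sets by (intro borel_cantelli_AE1) (simp_all add: emeasure_eq_measure)
  then show ?thesis
  proof (rule AE_mp[OF _ AE_I2], intro impI)
    fix \<omega> assume "eventually (\<lambda>n. \<omega> \<in> space M - E n) sequentially"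
    from this eventually_ge_at_top[of 1]
    show "eventually (\<lambda>n. \<bar>opt_score_letters R n (letters X Y \<omega>) - expected_opt_score R p n\<bar> < \<delta> * real n)
        sequentially"
      by eventually_elim (auto simp: E_def)
  qed
qed

lemma AE_opt_score_convergent:
  fixes p :: "'a::finite pmf" and R :: "'a score"
  assumes "prob_space M" "iid_letters M p X Y"
  obtains c where "AE \<omega> in M. (\<lambda>n. opt_score R n (\<lambda>i. X i \<omega>) (\<lambda>i. Y i \<omega>) / real n) \<longlonglongrightarrow> c"
proof -
  let ?e = "expected_opt_score R p"
  have "convergent (\<lambda>n. ?e n / real n)"
    using fekete[of ?e "3 * score_norm R"] expected_opt_score_superadditive abs_expected_opt_score_le by blast
  then obtain c where c: "(\<lambda>n. ?e n / real n) \<longlonglongrightarrow> c" by (auto simp: convergent_def)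
  have "AE \<omega> in M. \<forall>j::nat. eventually (\<lambda>n.
      \<bar>opt_score_letters R n (letters X Y \<omega>) - ?e n\<bar> < 1 / real (Suc j) * real n) sequentially"
    unfolding AE_all_countable by (intro allI AE_eventually_opt_score_near_expectation[OF assms]) simp
  then have "AE \<omega> in M. (\<lambda>n. opt_score R n (\<lambda>i. X i \<omega>) (\<lambda>i. Y i \<omega>) / real n) \<longlonglongrightarrow> c"
  proof (rule AE_mp[OF _ AE_I2], intro impI)
    fix \<omega>
    let ?L = "\<lambda>n. opt_score_letters R n (letters X Y \<omega>)"
    assume near: "\<forall>j::nat. eventually (\<lambda>n. \<bar>?L n - ?e n\<bar> < 1 / real (Suc j) * real n) sequentially"
    have "(\<lambda>n. (?L n - ?e n) / real n) \<longlonglongrightarrow> 0"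
    proof (rule tendstoI)
      fix \<epsilon> :: real assume "\<epsilon> > 0"
      then obtain j where j: "1 / real (Suc j) < \<epsilon>" using reals_Archimedean by (auto simp: inverse_eq_divide)
      from near[rule_format, of j] eventually_ge_at_top[of 1]
      show "eventually (\<lambda>n. dist ((?L n - ?e n) / real n) 0 < \<epsilon>) sequentially"
      proof eventually_elim
        case (elim n)
        then have "\<bar>?L n - ?e n\<bar> / real n < 1 / real (Suc j)" by (simp add: pos_divide_less_eq)
        then show ?case using j by (simp add: dist_real_def)
      qed
    qed
    from tendsto_add[OF this c]
    show "(\<lambda>n. opt_score R n (\<lambda>i. X i \<omega>) (\<lambda>i. Y i \<omega>) / real n) \<longlonglongrightarrow> c"
      by (simp add: opt_score_letters_letters diff_divide_distrib)
  qed
  then show ?thesis by (rule that)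
qed

lemma AE_opt_score_tendsto_lam:
  fixes p :: "'a::finite pmf" and R :: "'a score"
  assumes "prob_space M" "iid_letters M p X Y"
  shows "AE \<omega> in M. (\<lambda>n. opt_score R n (\<lambda>i. X i \<omega>) (\<lambda>i. Y i \<omega>) / real n) \<longlonglongrightarrow> lam M X Y R"
proof -
  interpret prob_space M by fact
  let ?L = "\<lambda>\<omega> n. opt_score R n (\<lambda>i. X i \<omega>) (\<lambda>i. Y i \<omega>) / real n"
  obtain c where c: "AE \<omega> in M. ?L \<omega> \<longlonglongrightarrow> c"
    using AE_opt_score_convergent[OF assms] .
  have "lam M X Y R = c"
    unfolding lam_def
  proof (rule the_equality)
    fix c' assume "AE \<omega> in M. ?L \<omega> \<longlonglongrightarrow> c'"
    with c have "AE \<omega> in M. c' = c" by eventually_elim (rule LIMSEQ_unique)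
    then show "c' = c" by simp
  qed (rule c)
  then show ?thesis using c by simp
qed

section \<open>Optimal alignments and the set SET\<close>

lemma LIMSEQ_if_subseq_limits_eq:
  fixes w :: "nat \<Rightarrow> real"
  assumes bounded: "\<And>n. \<bar>w n\<bar> \<le> B"
    and sub: "\<And>r l. strict_mono r \<Longrightarrow> (w \<circ> r) \<longlonglongrightarrow> l \<Longrightarrow> l = y0"
  shows "w \<longlonglongrightarrow> y0"
proof (rule ccontr)
  assume nc: "\<not> w \<longlonglongrightarrow> y0"
  have "\<not> (\<forall>e>0. eventually (\<lambda>n. dist (w n) y0 < e) sequentially)"
    using nc tendsto_iff[of w y0 sequentially] by argo
  then obtain e where e: "e > 0" and fr: "\<not> eventually (\<lambda>n. dist (w n) y0 < e) sequentially"
    by auto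
  define I where "I = {n. \<bar>w n - y0\<bar> \<ge> e}"
  have "infinite I"
  proof
    assume "finite I"
    then obtain N where N: "\<forall>n\<in>I. n < N"
      using \<open>finite I\<close> finite_nat_set_iff_bounded by auto
    have "eventually (\<lambda>n. dist (w n) y0 < e) sequentially"
    proof (rule eventually_sequentiallyI[of N])
      fix n assume "N \<le> n"
      then have "n \<notin> I" using N by auto
      then show "dist (w n) y0 < e" by (simp add: I_def dist_real_def)
    qed
    with fr show False by contradiction
  qed
  then obtain r :: "nat \<Rightarrow> nat" where r: "strict_mono r" "\<forall>n. r n \<in> I" using infinite_enumerate[OF \<open>infinite I\<close>] by blast
  have "bounded (range (w \<circ> r))" unfolding bounded_iff by (intro exI[of _ B]) (auto simp: bounded)
  from bounded_imp_convergent_subsequence[OF this]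
  obtain l s where s: "strict_mono s" "((w \<circ> r) \<circ> s) \<longlonglongrightarrow> l" by auto
  have rs: "strict_mono (r \<circ> s)" using r(1) s(1) by (rule strict_mono_o)
  have "w \<circ> (r \<circ> s) = (w \<circ> r) \<circ> s" by (simp add: o_assoc)
  then have "l = y0" using sub[OF rs] s(2) by simp
  moreover have "\<bar>l - y0\<bar> \<ge> e"
  proof -
    have "(\<lambda>k. \<bar>((w \<circ> r) \<circ> s) k - y0\<bar>) \<longlonglongrightarrow> \<bar>l - y0\<bar>" by (rule tendsto_rabs[OF tendsto_diff[OF s(2) tendsto_const]])
    moreover have "\<forall>k. \<bar>((w \<circ> r) \<circ> s) k - y0\<bar> \<ge> e" using r(2) by (simp add: I_def)
    ultimately show ?thesis by (intro LIMSEQ_le_const) auto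
  qed
  ultimately show False using e by simp
qed

lemma abs_lam_diff_le:
  fixes p :: "'a::finite pmf" and R R' :: "'a score"
  assumes "prob_space M" "iid_letters M p X Y"
  shows "\<bar>lam M X Y R - lam M X Y R'\<bar> \<le> 3 * score_norm (\<lambda>u v. R u v - R' u v)"
proof -
  interpret prob_space M by fact
  let ?L = "\<lambda>R \<omega> n. opt_score R n (\<lambda>i. X i \<omega>) (\<lambda>i. Y i \<omega>) / real n"
  let ?D = "3 * score_norm (\<lambda>u v. R u v - R' u v)"
  have pointwise: "\<bar>?L R \<omega> n - ?L R' \<omega> n\<bar> \<le> ?D" for \<omega> n
  proof (cases "n = 0")
    case False
    have "\<bar>?L R \<omega> n - ?L R' \<omega> n\<bar>
        = \<bar>opt_score R n (\<lambda>i. X i \<omega>) (\<lambda>i. Y i \<omega>) - opt_score R' n (\<lambda>i. X i \<omega>) (\<lambda>i. Y i \<omega>)\<bar> / real n"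
      by (simp add: diff_divide_distrib[symmetric])
    also have "\<dots> \<le> 3 * real n * score_norm (\<lambda>u v. R u v - R' u v) / real n"
      by (intro divide_right_mono abs_opt_score_diff_le) simp
    finally show ?thesis using False by simp
  qed (simp add: score_norm_nonneg)
  from AE_opt_score_tendsto_lam[OF assms, of R] AE_opt_score_tendsto_lam[OF assms, of R']
  have "AE \<omega> in M. \<bar>lam M X Y R - lam M X Y R'\<bar> \<le> ?D"
  proof eventually_elim
    case (elim \<omega>)
    show ?case
      by (rule LIMSEQ_le_const2[OF tendsto_rabs[OF tendsto_diff[OF elim]]]) (use pointwise in blast)
  qed
  then show ?thesis by simp
qed

lemma score_norm_lincomb_diff_le:
  "score_norm (\<lambda>u v. (a * S u v + b * T u v) - (a' * S u v + b' * T u v))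
     \<le> \<bar>a - a'\<bar> * score_norm S + \<bar>b - b'\<bar> * score_norm T"
proof (rule score_norm_le)
  fix u v
  have "\<bar>(a * S u v + b * T u v) - (a' * S u v + b' * T u v)\<bar> = \<bar>(a - a') * S u v + (b - b') * T u v\<bar>"
    by (simp add: algebra_simps)
  also have "\<dots> \<le> \<bar>a - a'\<bar> * \<bar>S u v\<bar> + \<bar>b - b'\<bar> * \<bar>T u v\<bar>"
    using abs_triangle_ineq[of "(a - a') * S u v" "(b - b') * T u v"] by (simp only: abs_mult)
  also have "\<dots> \<le> \<bar>a - a'\<bar> * score_norm S + \<bar>b - b'\<bar> * score_norm T"
    by (intro add_mono mult_left_mono abs_score_le_score_norm) simp_all
  finally show "\<bar>(a * S u v + b * T u v) - (a' * S u v + b' * T u v)\<bar>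
      \<le> \<bar>a - a'\<bar> * score_norm S + \<bar>b - b'\<bar> * score_norm T" .
qed

lemma continuous_on_lam_lincomb:
  fixes p :: "'a::finite pmf" and S T :: "'a score"
  assumes "prob_space M" "iid_letters M p X Y"
  shows "continuous_on UNIV (\<lambda>z. lam M X Y (\<lambda>u v. fst z * S u v + snd z * T u v))"
proof (rule lipschitz_on_continuous_on[OF lipschitz_onI])
  let ?K = "3 * (score_norm S + score_norm T)"
  show "0 \<le> ?K" using score_norm_nonneg[of S] score_norm_nonneg[of T] by simp
  fix z z' :: "real \<times> real"
  have "\<bar>fst z - fst z'\<bar> * score_norm S + \<bar>snd z - snd z'\<bar> * score_norm T
      \<le> dist z z' * score_norm S + dist z z' * score_norm T"
    using dist_fst_le[of z z'] dist_snd_le[of z z'] score_norm_nonneg[of S] score_norm_nonneg[of T]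
    by (intro add_mono mult_right_mono) (simp_all add: dist_real_def)
  with score_norm_lincomb_diff_le[of "fst z" S "snd z" T "fst z'" "snd z'"]
    abs_lam_diff_le[OF assms, of "\<lambda>u v. fst z * S u v + snd z * T u v" "\<lambda>u v. fst z' * S u v + snd z' * T u v"]
  show "dist (lam M X Y (\<lambda>u v. fst z * S u v + snd z * T u v)) (lam M X Y (\<lambda>u v. fst z' * S u v + snd z' * T u v))
      \<le> ?K * dist z z'"
    by (simp add: dist_real_def algebra_simps)
qed

lemma le_on_rational_pairs_imp_le:
  fixes f g :: "real \<times> real \<Rightarrow> real"
  assumes "continuous_on UNIV f" "continuous_on UNIV g"
    and "\<And>q1 q2 :: rat. f (of_rat q1, of_rat q2) \<le> g (of_rat q1, of_rat q2)"
  shows "f z \<le> g z"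
proof -
  have "\<rat> \<times> \<rat> \<subseteq> {z. f z \<le> g z}" using assms(3) by (auto elim!: Rats_cases)
  then have "closure (\<rat> \<times> \<rat>) \<subseteq> {z. f z \<le> g z}"
    by (rule closure_minimal) (rule closed_Collect_le[OF assms(1,2)])
  then show ?thesis by (auto simp: closure_Times Rats_closure_real)
qed

lemma subseq_limit_mem_SET:
  fixes S T :: "'a::finite score"
  assumes limits: "\<And>q1 q2 :: rat. (\<lambda>n. opt_score (\<lambda>u v. of_rat q1 * S u v + of_rat q2 * T u v) n x y / real n)
      \<longlonglongrightarrow> lam M X Y (\<lambda>u v. of_rat q1 * S u v + of_rat q2 * T u v)"
    and cont: "continuous_on UNIV (\<lambda>z. lam M X Y (\<lambda>u v. fst z * S u v + snd z * T u v))"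
    and opt: "\<And>n. \<pi> n \<in> opt_alignments S n x y"
    and "strict_mono r" and lim: "(\<lambda>k. align_score T (r k) (\<pi> (r k)) x y / real (r k)) \<longlonglongrightarrow> l"
  shows "(lam M X Y S, l) \<in> SET M X Y S T"
proof -
  let ?lam = "\<lambda>a b. lam M X Y (\<lambda>u v. a * S u v + b * T u v)"
  have "a * ?lam 1 0 + b * l \<le> ?lam a b" if a: "a \<in> \<rat>" and b: "b \<in> \<rat>" for a b
  proof -
    let ?R = "\<lambda>u v. a * S u v + b * T u v"
    have le: "a * (opt_score S n x y / real n) + b * (align_score T n (\<pi> n) x y / real n)
        \<le> opt_score ?R n x y / real n" for n
    proof -
      have \<pi>: "\<pi> n \<in> alignments n" "align_score S n (\<pi> n) x y = opt_score S n x y"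
        using opt[of n] by (auto simp: opt_alignments_def)
      have "a * opt_score S n x y + b * align_score T n (\<pi> n) x y = align_score ?R n (\<pi> n) x y"
        unfolding align_score_lincomb \<pi>(2) ..
      also have "\<dots> \<le> opt_score ?R n x y" by (rule align_score_le_opt_score[OF \<pi>(1)])
      finally have "(a * opt_score S n x y + b * align_score T n (\<pi> n) x y) / real n
          \<le> opt_score ?R n x y / real n" by (rule divide_right_mono) simp
      then show ?thesis by (simp only: add_divide_distrib times_divide_eq_right)
    qed
    from a obtain q1 where q1: "a = of_rat q1" by (rule Rats_cases)
    from b obtain q2 where q2: "b = of_rat q2" by (rule Rats_cases)
    from q1 q2 have "(\<lambda>n. opt_score ?R n x y / real n) \<longlonglongrightarrow> ?lam a b" by (simp only: limits)
    from LIMSEQ_subseq_LIMSEQ[OF this \<open>strict_mono r\<close>]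
    have R_lim: "(\<lambda>k. opt_score ?R (r k) x y / real (r k)) \<longlonglongrightarrow> ?lam a b" by (simp add: o_def)
    have "(\<lambda>n. opt_score S n x y / real n) \<longlonglongrightarrow> ?lam 1 0" using limits[of 1 0] by simp
    from LIMSEQ_subseq_LIMSEQ[OF this \<open>strict_mono r\<close>]
    have S_lim: "(\<lambda>k. opt_score S (r k) x y / real (r k)) \<longlonglongrightarrow> ?lam 1 0" by (simp add: o_def)
    show ?thesis
      by (rule LIMSEQ_le[OF tendsto_add[OF tendsto_mult_left[OF S_lim] tendsto_mult_left[OF lim]] R_lim])
        (use le in blast)
  qed
  then have "z1 * ?lam 1 0 + z2 * l \<le> ?lam z1 z2" for z1 z2
    using le_on_rational_pairs_imp_le[where f = "\<lambda>z. fst z * ?lam 1 0 + snd z * l", OF _ cont, of "(z1, z2)"]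
    by (simp add: continuous_on_add continuous_on_mult_right continuous_on_fst continuous_on_snd continuous_on_id)
  then show ?thesis by (simp add: SET_def)
qed

lemma T_score_of_S_optimal_tendsto:
  fixes S T :: "'a::finite score"
  assumes limits: "\<And>q1 q2 :: rat. (\<lambda>n. opt_score (\<lambda>u v. of_rat q1 * S u v + of_rat q2 * T u v) n x y / real n)
      \<longlonglongrightarrow> lam M X Y (\<lambda>u v. of_rat q1 * S u v + of_rat q2 * T u v)"
    and cont: "continuous_on UNIV (\<lambda>z. lam M X Y (\<lambda>u v. fst z * S u v + snd z * T u v))"
    and "(x0, y0) \<in> SET M X Y S T" and max: "\<forall>(x, y) \<in> SET M X Y S T. x \<le> x0 \<and> (x = x0 \<longrightarrow> y = y0)"
    and opt: "\<And>n. \<pi> n \<in> opt_alignments S n x y"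
  shows "(\<lambda>n. align_score T n (\<pi> n) x y / real n) \<longlonglongrightarrow> y0"
proof (rule LIMSEQ_if_subseq_limits_eq)
  show "\<bar>align_score T n (\<pi> n) x y / real n\<bar> \<le> 3 * score_norm T" for n
    using opt[of n] by (intro abs_align_score_div_le) (simp add: opt_alignments_def)
next
  fix r l assume "strict_mono r" "((\<lambda>n. align_score T n (\<pi> n) x y / real n) \<circ> r) \<longlonglongrightarrow> l"
  then have "(lam M X Y S, l) \<in> SET M X Y S T"
    by (intro subseq_limit_mem_SET[OF limits cont opt]) (simp_all add: o_def)
  moreover have "1 * x0 + 0 * y0 \<le> lam M X Y (\<lambda>u v. 1 * S u v + 0 * T u v)"
    using \<open>(x0, y0) \<in> SET M X Y S T\<close> unfolding SET_def by blast
  ultimately show "l = y0" using max by force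
qed

lemma Max_Min_image_tendsto:
  fixes f :: "nat \<Rightarrow> 'b \<Rightarrow> real"
  assumes "\<And>n. finite (A n)" "\<And>n. A n \<noteq> {}"
    and "\<And>\<pi>. (\<And>n. \<pi> n \<in> A n) \<Longrightarrow> (\<lambda>n. f n (\<pi> n)) \<longlonglongrightarrow> y0"
  shows "(\<lambda>n. Max (f n ` A n)) \<longlonglongrightarrow> y0" "(\<lambda>n. Min (f n ` A n)) \<longlonglongrightarrow> y0"
proof -
  have "Max (f n ` A n) \<in> f n ` A n" "Min (f n ` A n) \<in> f n ` A n" for n
    using assms(1,2) by simp_all
  then have "\<forall>n. \<exists>\<pi>. \<pi> \<in> A n \<and> f n \<pi> = Max (f n ` A n)" "\<forall>n. \<exists>\<pi>. \<pi> \<in> A n \<and> f n \<pi> = Min (f n ` A n)"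
    by (metis imageE)+
  then obtain \<pi>max \<pi>min where "\<forall>n. \<pi>max n \<in> A n \<and> f n (\<pi>max n) = Max (f n ` A n)"
    and "\<forall>n. \<pi>min n \<in> A n \<and> f n (\<pi>min n) = Min (f n ` A n)"
    by (elim choice[THEN exE])
  then show "(\<lambda>n. Max (f n ` A n)) \<longlonglongrightarrow> y0" "(\<lambda>n. Min (f n ` A n)) \<longlonglongrightarrow> y0"
    using assms(3)[of \<pi>max] assms(3)[of \<pi>min] by simp_all
qed

lemma Max_Min_T_score_of_S_optimal_tendsto:
  fixes S T :: "'a::finite score"
  assumes limits: "\<forall>q :: rat \<times> rat.
      (\<lambda>n. opt_score (\<lambda>u v. of_rat (fst q) * S u v + of_rat (snd q) * T u v) n x y / real n)
      \<longlonglongrightarrow> lam M X Y (\<lambda>u v. of_rat (fst q) * S u v + of_rat (snd q) * T u v)"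
    and cont: "continuous_on UNIV (\<lambda>z. lam M X Y (\<lambda>u v. fst z * S u v + snd z * T u v))"
    and "(x0, y0) \<in> SET M X Y S T" "\<forall>(x, y) \<in> SET M X Y S T. x \<le> x0 \<and> (x = x0 \<longrightarrow> y = y0)"
  shows "(\<lambda>n. Max ((\<lambda>\<pi>. align_score T n \<pi> x y / real n) ` opt_alignments S n x y)) \<longlonglongrightarrow> y0
    \<and> (\<lambda>n. Min ((\<lambda>\<pi>. align_score T n \<pi> x y / real n) ` opt_alignments S n x y)) \<longlonglongrightarrow> y0"
proof -
  have "(\<lambda>n. opt_score (\<lambda>u v. of_rat q1 * S u v + of_rat q2 * T u v) n x y / real n)
      \<longlonglongrightarrow> lam M X Y (\<lambda>u v. of_rat q1 * S u v + of_rat q2 * T u v)" for q1 q2 :: rat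
    using limits[rule_format, of "(q1, q2)"] by simp
  note Max_Min_image_tendsto[where A = "\<lambda>n. opt_alignments S n x y" and f = "\<lambda>n \<pi>. align_score T n \<pi> x y / real n",
      OF finite_opt_alignments opt_alignments_nonempty T_score_of_S_optimal_tendsto[OF this cont assms(3,4)]]
  then show ?thesis by simp
qed

theorem mainTheorem9:
  fixes M :: "'w measure" and p :: "'a::finite pmf"
    and X Y :: "nat \<Rightarrow> 'w \<Rightarrow> 'a" and S T :: "'a score" and x0 y0 :: real
  assumes "prob_space M"
    and "iid_letters M p X Y"
    and "symmetric_score S" and "symmetric_score T"
    and "(x0, y0) \<in> SET M X Y S T"
    and "\<forall>(x, y) \<in> SET M X Y S T. x \<le> x0 \<and> (x = x0 \<longrightarrow> y = y0)"
  shows "AE \<omega> in M.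
      (\<lambda>n. Max ((\<lambda>\<pi>. align_score T n \<pi> (\<lambda>i. X i \<omega>) (\<lambda>i. Y i \<omega>) / real n)
                 ` opt_alignments S n (\<lambda>i. X i \<omega>) (\<lambda>i. Y i \<omega>))) \<longlonglongrightarrow> y0
    \<and> (\<lambda>n. Min ((\<lambda>\<pi>. align_score T n \<pi> (\<lambda>i. X i \<omega>) (\<lambda>i. Y i \<omega>) / real n)
                 ` opt_alignments S n (\<lambda>i. X i \<omega>) (\<lambda>i. Y i \<omega>))) \<longlonglongrightarrow> y0"
proof -
  have "AE \<omega> in M. \<forall>q :: rat \<times> rat.
      (\<lambda>n. opt_score (\<lambda>u v. of_rat (fst q) * S u v + of_rat (snd q) * T u v) n (\<lambda>i. X i \<omega>) (\<lambda>i. Y i \<omega>) / real n)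
      \<longlonglongrightarrow> lam M X Y (\<lambda>u v. of_rat (fst q) * S u v + of_rat (snd q) * T u v)"
    unfolding AE_all_countable by (intro allI AE_opt_score_tendsto_lam[OF assms(1,2)])
  then show ?thesis
    by eventually_elim
      (rule Max_Min_T_score_of_S_optimal_tendsto[OF _ continuous_on_lam_lincomb[OF assms(1,2)] assms(5,6)])
qed

end
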